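(* If $P\in\mathfrak p_{\mathbb C}$ preserves some supersymmetry, i.e. there exists $0\ne\xi\in\mathbb C^{16}$ with $\sum_{I,A}\Gamma^I_{\dot AA}P^A\xi^I=0$ for all $\dot A=1,\dots,128$, then $P$ is a nilpotent element of $(\mathfrak e_8)_{\mathbb C}$. In particular, for every supersymmetric solution of the timelike class, $P_z$ is nilpotent at every point of spacetime.
   Context: $(\mathfrak e_8)_{\mathbb C}=\mathfrak{so}(16)_{\mathbb C}\oplus\mathfrak p_{\mathbb C}$ with $\mathfrak{so}(16)$ generators $X^{IJ}$ and $\mathfrak p_{\mathbb C}$ spanned by $Y^A$, $A=1,\dots,128$, with $[X^{IJ},Y^A]=-\tfrac12\Gamma^{IJ}_{AB}Y^B$, $[Y^A,Y^B]=\tfrac12\Gamma^{IJ}_{AB}X^{IJ}$; $\Gamma^I_{A\dot A}$ are real chiral blocks of $SO(16)$ gamma matrices, $\Gamma^{IJ}_{AB}=\tfrac12(\Gamma^I_{A\dot A}\Gamma^J_{\dot AB}-\Gamma^J_{A\dot A}\Gamma^I_{\dot AB})$, and $P=P^AY^A$. An element is nilpotent if its adjoint action is nilpotent. In the timelike class, $P_z$ is the $z$-component of $P=\tfrac{1-\theta}{2}V^{-1}dV$ and supersymmetry requires $\bar\zeta^I\Gamma^I_{\dot AA}P^A_z=0$ with $\zeta^I=\epsilon^I_1+i\epsilon^I_2$ not identically zero. *)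

theory Defs
  imports Complex_Main
begin

text \<open>Conventions (0-based indices): vector index I < 16, chiral spinor index A < 128,
 conjugate chiral index Ad < 128. The real chiral blocks are given by
 G :: nat => nat => nat => real with  G I A Ad = Gamma^I_{A Ad}, and
 Gamma^I_{Ad A} = Gamma^I_{A Ad} (the full real gamma matrices are symmetric).\<close>

definition gamma_blocks :: "(nat \<Rightarrow> nat \<Rightarrow> nat \<Rightarrow> real) \<Rightarrow> bool" where
  "gamma_blocks G \<longleftrightarrow>
     (\<forall>I<16. \<forall>J<16. \<forall>A<128. \<forall>B<128.
        (\<Sum>Ad<128. G I A Ad * G J B Ad + G J A Ad * G I B Ad)
          = (if I = J \<and> A = B then 2 else 0)) \<and>
     (\<forall>I<16. \<forall>J<16. \<forall>Ad<128. \<forall>Bd<128.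
        (\<Sum>A<128. G I A Ad * G J A Bd + G J A Ad * G I A Bd)
          = (if I = J \<and> Ad = Bd then 2 else 0))"

definition gamma2 :: "(nat \<Rightarrow> nat \<Rightarrow> nat \<Rightarrow> real) \<Rightarrow> nat \<Rightarrow> nat \<Rightarrow> nat \<Rightarrow> nat \<Rightarrow> real" where
  "gamma2 G I J A B = (1/2) * (\<Sum>Ad<128. G I A Ad * G J B Ad - G J A Ad * G I B Ad)"

text \<open>An element of (e8)_C = so(16)_C (+) p_C is represented as a pair (a, v):
 the so(16) part is 1/2 * sum_{I,J} a_{IJ} X^{IJ} with a antisymmetric, and the p part is
 sum_A v_A Y^A.\<close>
type_synonym e8elt = "(nat \<Rightarrow> nat \<Rightarrow> complex) \<times> (nat \<Rightarrow> complex)"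

definition e8_carrier :: "e8elt set" where
  "e8_carrier = {(a, v). (\<forall>I J. a I J = - a J I) \<and>
                          (\<forall>I J. \<not> (I < 16 \<and> J < 16) \<longrightarrow> a I J = 0) \<and>
                          (\<forall>A. A \<ge> 128 \<longrightarrow> v A = 0)}"

definition e8_zero :: e8elt where
  "e8_zero = ((\<lambda>_ _. 0), (\<lambda>_. 0))"

text \<open>Adjoint action ad_P = [P, -] of P = sum_A P^A Y^A, computed from
 [X^{IJ},Y^A] = -1/2 Gamma^{IJ}_{AB} Y^B and [Y^A,Y^B] = 1/2 Gamma^{IJ}_{AB} X^{IJ}:
 [P, X^{IJ}] = 1/2 Gamma^{IJ}_{AB} P^A Y^B,
 [P, v^B Y^B] = 1/2 (P^A v^B Gamma^{IJ}_{AB}) X^{IJ}.\<close>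
definition ad_p :: "(nat \<Rightarrow> nat \<Rightarrow> nat \<Rightarrow> real) \<Rightarrow> (nat \<Rightarrow> complex) \<Rightarrow> e8elt \<Rightarrow> e8elt" where
  "ad_p G P x = (case x of (a, v) \<Rightarrow>
     ((\<lambda>I J. if I < 16 \<and> J < 16
              then (\<Sum>A<128. \<Sum>B<128. P A * v B * complex_of_real (gamma2 G I J A B))
              else 0),
      (\<lambda>B. if B < 128
            then (\<Sum>I<16. \<Sum>J<16. \<Sum>A<128.
                    (1/4) * a I J * complex_of_real (gamma2 G I J A B) * P A)
            else 0)))"

definition nilpotent_p :: "(nat \<Rightarrow> nat \<Rightarrow> nat \<Rightarrow> real) \<Rightarrow> (nat \<Rightarrow> complex) \<Rightarrow> bool" where
  "nilpotent_p G P \<longleftrightarrow> (\<exists>n. \<forall>x \<in> e8_carrier. (ad_p G P ^^ n) x = e8_zero)"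

end

theory Submission
  imports Defs
begin

text \<open>Clifford multiplication by \<xi> annihilates P, and \<xi>\<xi> = (\<xi>\<cdot>\<xi>) in the Clifford
 algebra, so \<xi> is a null vector unless P = 0. A null \<xi> determines a chain of subspaces
 of (e8)_C, each mapped by ad_P into the next:
 so(16)_C \<rightarrow> p_C \<rightarrow> {a \<in> so(16)_C : a\<xi> \<in> C\<xi>} \<rightarrow> {v \<in> p_C : \<xi>v = 0}
 \<rightarrow> {\<xi> \<and> w : w\<cdot>\<xi> = 0} \<rightarrow> 0.
 The two middle steps only use the Clifford relations and the fact that every spinor v with
 \<xi>v = 0 has the form v = \<xi>(\<eta>v)/2 for any \<eta> with \<xi>\<cdot>\<eta> = 1. Hence ad_P^5 = 0.\<close>

definition gamma_mul :: "(nat \<Rightarrow> nat \<Rightarrow> nat \<Rightarrow> real) \<Rightarrow> nat \<Rightarrow> (nat \<Rightarrow> complex) \<Rightarrow> nat \<Rightarrow> complex" where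
  "gamma_mul G I v Ad = (\<Sum>A<128. complex_of_real (G I A Ad) * v A)"

definition gamma_mul_tr :: "(nat \<Rightarrow> nat \<Rightarrow> nat \<Rightarrow> real) \<Rightarrow> nat \<Rightarrow> (nat \<Rightarrow> complex) \<Rightarrow> nat \<Rightarrow> complex" where
  "gamma_mul_tr G I s A = (\<Sum>Ad<128. complex_of_real (G I A Ad) * s Ad)"

definition cliff_mul :: "(nat \<Rightarrow> nat \<Rightarrow> nat \<Rightarrow> real) \<Rightarrow> (nat \<Rightarrow> complex) \<Rightarrow> (nat \<Rightarrow> complex) \<Rightarrow> nat \<Rightarrow> complex" where
  "cliff_mul G x v Ad = (\<Sum>I<16. x I * gamma_mul G I v Ad)"

definition cliff_mul_tr :: "(nat \<Rightarrow> nat \<Rightarrow> nat \<Rightarrow> real) \<Rightarrow> (nat \<Rightarrow> complex) \<Rightarrow> (nat \<Rightarrow> complex) \<Rightarrow> nat \<Rightarrow> complex" where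
  "cliff_mul_tr G x s A = (\<Sum>I<16. x I * gamma_mul_tr G I s A)"

definition spinor_pairing :: "(nat \<Rightarrow> complex) \<Rightarrow> (nat \<Rightarrow> complex) \<Rightarrow> complex" where
  "spinor_pairing s t = (\<Sum>A<128. s A * t A)"

definition vec_pairing :: "(nat \<Rightarrow> complex) \<Rightarrow> (nat \<Rightarrow> complex) \<Rightarrow> complex" where
  "vec_pairing x y = (\<Sum>I<16. x I * y I)"

definition cliff_annihilates :: "(nat \<Rightarrow> nat \<Rightarrow> nat \<Rightarrow> real) \<Rightarrow> (nat \<Rightarrow> complex) \<Rightarrow> (nat \<Rightarrow> complex) \<Rightarrow> bool" where
  "cliff_annihilates G x v \<longleftrightarrow> (\<forall>Ad<128. cliff_mul G x v Ad = 0)"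

lemma cliff_mul_expand:
  "cliff_mul G x v Ad = (\<Sum>I<16. \<Sum>A<128. complex_of_real (G I A Ad) * v A * x I)"
  by (simp add: cliff_mul_def gamma_mul_def sum_distrib_left mult_ac)

lemma vec_pairing_dual:
  assumes "\<exists>I<16. x I \<noteq> 0"
  shows "\<exists>y. vec_pairing x y = 1"
proof -
  from assms obtain I where I: "I < 16" "x I \<noteq> 0" by blast
  have "vec_pairing x (\<lambda>J. if J = I then 1 / x I else 0) = 1"
    using I by (simp add: vec_pairing_def if_distrib[of "\<lambda>z. x _ * z"] cong: if_cong)
  then show ?thesis by blast
qed

lemma gamma_mul_cong: "(\<And>A. A < 128 \<Longrightarrow> u A = u' A) \<Longrightarrow> gamma_mul G I u Ad = gamma_mul G I u' Ad"
  by (simp add: gamma_mul_def)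

lemma gamma_mul_tr_cong: "(\<And>A. A < 128 \<Longrightarrow> u A = u' A) \<Longrightarrow> gamma_mul_tr G I u A = gamma_mul_tr G I u' A"
  by (simp add: gamma_mul_tr_def)

lemma cliff_mul_cong: "(\<And>A. A < 128 \<Longrightarrow> u A = u' A) \<Longrightarrow> cliff_mul G x u Ad = cliff_mul G x u' Ad"
  unfolding cliff_mul_def by (metis gamma_mul_cong)

lemma cliff_mul_tr_cong: "(\<And>A. A < 128 \<Longrightarrow> u A = u' A) \<Longrightarrow> cliff_mul_tr G x u A = cliff_mul_tr G x u' A"
  unfolding cliff_mul_tr_def by (metis gamma_mul_tr_cong)

lemma spinor_pairing_cong:
  "(\<And>A. A < 128 \<Longrightarrow> u A = u' A) \<Longrightarrow> (\<And>A. A < 128 \<Longrightarrow> w A = w' A) \<Longrightarrow> spinor_pairing u w = spinor_pairing u' w'"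
  by (simp add: spinor_pairing_def)

lemma gamma_mul_diff: "gamma_mul G I (\<lambda>A. u A - w A) Ad = gamma_mul G I u Ad - gamma_mul G I w Ad"
  by (simp add: gamma_mul_def right_diff_distrib sum_subtractf)

lemma gamma_mul_scale: "gamma_mul G I (\<lambda>A. c * u A) Ad = c * gamma_mul G I u Ad"
  by (simp add: gamma_mul_def sum_distrib_left mult.left_commute)

lemma gamma_mul_sum: "gamma_mul G I (\<lambda>A. \<Sum>i\<in>S. h i A) Ad = (\<Sum>i\<in>S. gamma_mul G I (h i) Ad)"
  unfolding gamma_mul_def sum_distrib_left by (rule sum.swap)

lemma gamma_mul_tr_scale: "gamma_mul_tr G I (\<lambda>A. c * u A) A = c * gamma_mul_tr G I u A"
  by (simp add: gamma_mul_tr_def sum_distrib_left mult.left_commute)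

lemma gamma_mul_tr_sum: "gamma_mul_tr G I (\<lambda>A. \<Sum>i\<in>S. h i A) A = (\<Sum>i\<in>S. gamma_mul_tr G I (h i) A)"
  unfolding gamma_mul_tr_def sum_distrib_left by (rule sum.swap)

lemma gamma_mul_tr_zero [simp]: "gamma_mul_tr G I (\<lambda>_. 0) A = 0"
  by (simp add: gamma_mul_tr_def)

lemma cliff_mul_diff: "cliff_mul G x (\<lambda>A. u A - w A) Ad = cliff_mul G x u Ad - cliff_mul G x w Ad"
  by (simp add: cliff_mul_def gamma_mul_diff right_diff_distrib sum_subtractf)

lemma cliff_mul_scale: "cliff_mul G x (\<lambda>A. c * u A) Ad = c * cliff_mul G x u Ad"
  by (simp add: cliff_mul_def gamma_mul_scale sum_distrib_left mult.left_commute)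

lemma cliff_mul_sum: "cliff_mul G x (\<lambda>A. \<Sum>i\<in>S. h i A) Ad = (\<Sum>i\<in>S. cliff_mul G x (h i) Ad)"
  unfolding cliff_mul_def gamma_mul_sum sum_distrib_left by (rule sum.swap)

lemma cliff_mul_tr_scale: "cliff_mul_tr G x (\<lambda>A. c * u A) A = c * cliff_mul_tr G x u A"
  by (simp add: cliff_mul_tr_def gamma_mul_tr_scale sum_distrib_left mult.left_commute)

lemma cliff_mul_tr_sum: "cliff_mul_tr G x (\<lambda>A. \<Sum>i\<in>S. h i A) A = (\<Sum>i\<in>S. cliff_mul_tr G x (h i) A)"
  unfolding cliff_mul_tr_def gamma_mul_tr_sum sum_distrib_left by (rule sum.swap)

lemma cliff_mul_tr_zero [simp]: "cliff_mul_tr G x (\<lambda>_. 0) A = 0"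
  by (simp add: cliff_mul_tr_def)

lemma cliff_mul_fun: "cliff_mul G x v = (\<lambda>Ad. \<Sum>J<16. x J * gamma_mul G J v Ad)"
  by (rule ext) (simp add: cliff_mul_def)

lemma cliff_mul_tr_fun: "cliff_mul_tr G x v = (\<lambda>A. \<Sum>J<16. x J * gamma_mul_tr G J v A)"
  by (rule ext) (simp add: cliff_mul_tr_def)

lemma gamma_mul_tr_cliff_mul:
  "gamma_mul_tr G I (cliff_mul G x v) A = (\<Sum>J<16. x J * gamma_mul_tr G I (gamma_mul G J v) A)"
  unfolding cliff_mul_fun gamma_mul_tr_sum gamma_mul_tr_scale ..

lemma gamma_mul_cliff_mul_tr:
  "gamma_mul G I (cliff_mul_tr G x v) A = (\<Sum>J<16. x J * gamma_mul G I (gamma_mul_tr G J v) A)"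
  unfolding cliff_mul_tr_fun gamma_mul_sum gamma_mul_scale ..

lemma cliff_mul_tr_cliff_mul:
  "cliff_mul_tr G y (cliff_mul G x v) A = (\<Sum>J<16. x J * cliff_mul_tr G y (gamma_mul G J v) A)"
  unfolding cliff_mul_fun cliff_mul_tr_sum cliff_mul_tr_scale ..

lemma cliff_mul_tr_cliff_mul_expand:
  "cliff_mul_tr G y (cliff_mul G x v) B = (\<Sum>I<16. \<Sum>J<16. x I * y J * gamma_mul_tr G J (gamma_mul G I v) B)"
proof -
  have "cliff_mul_tr G y (cliff_mul G x v) B = (\<Sum>J<16. \<Sum>I<16. x I * y J * gamma_mul_tr G J (gamma_mul G I v) B)"
    by (simp add: cliff_mul_tr_def gamma_mul_tr_cliff_mul sum_distrib_left mult_ac)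
  also have "\<dots> = (\<Sum>I<16. \<Sum>J<16. x I * y J * gamma_mul_tr G J (gamma_mul G I v) B)"
    by (rule sum.swap)
  finally show ?thesis .
qed

lemma spinor_pairing_comm: "spinor_pairing u w = spinor_pairing w u"
  by (simp add: spinor_pairing_def mult.commute)

lemma spinor_pairing_zero [simp]: "spinor_pairing (\<lambda>_. 0) t = 0"
  by (simp add: spinor_pairing_def)

lemma spinor_pairing_diff_left: "spinor_pairing (\<lambda>A. u A - w A) t = spinor_pairing u t - spinor_pairing w t"
  by (simp add: spinor_pairing_def left_diff_distrib sum_subtractf)

lemma spinor_pairing_diff_right: "spinor_pairing t (\<lambda>A. u A - w A) = spinor_pairing t u - spinor_pairing t w"
  by (simp add: spinor_pairing_def right_diff_distrib sum_subtractf)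

lemma spinor_pairing_scale_left: "spinor_pairing (\<lambda>A. c * u A) t = c * spinor_pairing u t"
  by (simp add: spinor_pairing_def sum_distrib_left mult.assoc)

lemma spinor_pairing_scale_right: "spinor_pairing t (\<lambda>A. c * u A) = c * spinor_pairing t u"
  by (simp add: spinor_pairing_def sum_distrib_left mult.left_commute)

lemma spinor_pairing_sum_left: "spinor_pairing (\<lambda>A. \<Sum>i\<in>S. h i A) t = (\<Sum>i\<in>S. spinor_pairing (h i) t)"
  unfolding spinor_pairing_def sum_distrib_right by (rule sum.swap)

lemma spinor_pairing_sum_right: "spinor_pairing t (\<lambda>A. \<Sum>i\<in>S. h i A) = (\<Sum>i\<in>S. spinor_pairing t (h i))"
  unfolding spinor_pairing_def sum_distrib_left by (rule sum.swap)

lemma spinor_pairing_gamma_mul: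
  "spinor_pairing u (gamma_mul G I v) = spinor_pairing (gamma_mul_tr G I u) v"
proof -
  have "spinor_pairing u (gamma_mul G I v)
      = (\<Sum>Ad<128. \<Sum>A<128. u Ad * (complex_of_real (G I A Ad) * v A))"
    by (simp add: spinor_pairing_def gamma_mul_def sum_distrib_left)
  also have "\<dots> = (\<Sum>A<128. \<Sum>Ad<128. u Ad * (complex_of_real (G I A Ad) * v A))"
    by (rule sum.swap)
  also have "\<dots> = spinor_pairing (gamma_mul_tr G I u) v"
    by (simp add: spinor_pairing_def gamma_mul_tr_def sum_distrib_right sum_distrib_left mult_ac)
  finally show ?thesis .
qed

lemma spinor_pairing_cliff_mul:
  "spinor_pairing u (cliff_mul G x v) = spinor_pairing (cliff_mul_tr G x u) v"
proof -
  have "spinor_pairing u (cliff_mul G x v) = (\<Sum>I<16. x I * spinor_pairing u (gamma_mul G I v))"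
    unfolding cliff_mul_fun by (simp add: spinor_pairing_sum_right spinor_pairing_scale_right)
  also have "\<dots> = (\<Sum>I<16. x I * spinor_pairing (gamma_mul_tr G I u) v)"
    by (simp add: spinor_pairing_gamma_mul)
  also have "\<dots> = spinor_pairing (cliff_mul_tr G x u) v"
    unfolding cliff_mul_tr_fun by (simp add: spinor_pairing_sum_left spinor_pairing_scale_left)
  finally show ?thesis .
qed

subsection \<open>Clifford relations\<close>

context
  fixes G :: "nat \<Rightarrow> nat \<Rightarrow> nat \<Rightarrow> real"
  assumes gamma: "gamma_blocks G"
begin

lemma gamma_mul_tr_gamma_mul_anticomm:
  assumes A: "A < 128" and I: "I < 16" and J: "J < 16"
  shows "gamma_mul_tr G I (gamma_mul G J v) A + gamma_mul_tr G J (gamma_mul G I v) A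
       = (if I = J then 2 * v A else 0)"
proof -
  have rel: "(\<Sum>Ad<128. G I A Ad * G J B Ad + G J A Ad * G I B Ad) = (if I = J \<and> A = B then 2 else 0)"
    if "B < 128" for B
    using gamma A I J that unfolding gamma_blocks_def by blast
  have expand: "gamma_mul_tr G I (gamma_mul G J v) A
      = (\<Sum>B<128. \<Sum>Ad<128. complex_of_real (G I A Ad) * (complex_of_real (G J B Ad) * v B))" for I J
    by (simp add: gamma_mul_tr_def gamma_mul_def sum_distrib_left) (rule sum.swap)
  have "gamma_mul_tr G I (gamma_mul G J v) A + gamma_mul_tr G J (gamma_mul G I v) A
     = (\<Sum>B<128. v B * complex_of_real (\<Sum>Ad<128. G I A Ad * G J B Ad + G J A Ad * G I B Ad))"
    unfolding expand by (simp add: sum.distrib[symmetric] sum_distrib_left algebra_simps)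
  also have "\<dots> = (\<Sum>B<128. v B * (if I = J \<and> A = B then 2 else 0))"
    by (rule sum.cong) (simp_all add: rel)
  also have "\<dots> = (if I = J then 2 * v A else 0)"
    using A by (auto simp: if_distrib[of "\<lambda>x. v _ * x"] sum.delta cong: if_cong)
  finally show ?thesis .
qed

lemma gamma_mul_gamma_mul_tr_anticomm:
  assumes Ad: "Ad < 128" and I: "I < 16" and J: "J < 16"
  shows "gamma_mul G I (gamma_mul_tr G J s) Ad + gamma_mul G J (gamma_mul_tr G I s) Ad
       = (if I = J then 2 * s Ad else 0)"
proof -
  have rel: "(\<Sum>A<128. G I A Ad * G J A Bd + G J A Ad * G I A Bd) = (if I = J \<and> Ad = Bd then 2 else 0)"
    if "Bd < 128" for Bd
    using gamma Ad I J that unfolding gamma_blocks_def by blast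
  have expand: "gamma_mul G I (gamma_mul_tr G J s) Ad
      = (\<Sum>Bd<128. \<Sum>A<128. complex_of_real (G I A Ad) * (complex_of_real (G J A Bd) * s Bd))" for I J
    by (simp add: gamma_mul_tr_def gamma_mul_def sum_distrib_left sum_distrib_right mult_ac) (rule sum.swap)
  have "gamma_mul G I (gamma_mul_tr G J s) Ad + gamma_mul G J (gamma_mul_tr G I s) Ad
     = (\<Sum>Bd<128. s Bd * complex_of_real (\<Sum>A<128. G I A Ad * G J A Bd + G J A Ad * G I A Bd))"
    unfolding expand by (simp add: sum.distrib[symmetric] sum_distrib_left algebra_simps)
  also have "\<dots> = (\<Sum>Bd<128. s Bd * (if I = J \<and> Ad = Bd then 2 else 0))"
    by (rule sum.cong) (simp_all add: rel)
  also have "\<dots> = (if I = J then 2 * s Ad else 0)"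
    using Ad by (auto simp: if_distrib[of "\<lambda>x. s _ * x"] sum.delta cong: if_cong)
  finally show ?thesis .
qed

lemma cliff_mul_tr_gamma_mul_anticomm:
  assumes A: "A < 128" and I: "I < 16"
  shows "cliff_mul_tr G x (gamma_mul G I v) A + gamma_mul_tr G I (cliff_mul G x v) A = 2 * x I * v A"
proof -
  have "cliff_mul_tr G x (gamma_mul G I v) A + gamma_mul_tr G I (cliff_mul G x v) A
      = (\<Sum>J<16. x J * (gamma_mul_tr G J (gamma_mul G I v) A + gamma_mul_tr G I (gamma_mul G J v) A))"
    unfolding gamma_mul_tr_cliff_mul by (simp add: cliff_mul_tr_def sum.distrib[symmetric] distrib_left)
  also have "\<dots> = (\<Sum>J<16. x J * (if J = I then 2 * v A else 0))"
    by (rule sum.cong) (simp_all add: gamma_mul_tr_gamma_mul_anticomm A I)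
  also have "\<dots> = 2 * x I * v A"
    using I by (simp add: if_distrib[of "\<lambda>y. x _ * y"] cong: if_cong)
  finally show ?thesis .
qed

lemma cliff_mul_gamma_mul_tr_anticomm:
  assumes Ad: "Ad < 128" and I: "I < 16"
  shows "cliff_mul G x (gamma_mul_tr G I s) Ad + gamma_mul G I (cliff_mul_tr G x s) Ad = 2 * x I * s Ad"
proof -
  have "cliff_mul G x (gamma_mul_tr G I s) Ad + gamma_mul G I (cliff_mul_tr G x s) Ad
      = (\<Sum>J<16. x J * (gamma_mul G J (gamma_mul_tr G I s) Ad + gamma_mul G I (gamma_mul_tr G J s) Ad))"
    unfolding gamma_mul_cliff_mul_tr by (simp add: cliff_mul_def sum.distrib[symmetric] distrib_left)
  also have "\<dots> = (\<Sum>J<16. x J * (if J = I then 2 * s Ad else 0))"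
    by (rule sum.cong) (simp_all add: gamma_mul_gamma_mul_tr_anticomm Ad I)
  also have "\<dots> = 2 * x I * s Ad"
    using I by (simp add: if_distrib[of "\<lambda>y. x _ * y"] cong: if_cong)
  finally show ?thesis .
qed

lemma cliff_mul_tr_cliff_mul_anticomm:
  assumes A: "A < 128"
  shows "cliff_mul_tr G x (cliff_mul G y v) A + cliff_mul_tr G y (cliff_mul G x v) A
       = 2 * vec_pairing x y * v A"
proof -
  have "cliff_mul_tr G x (cliff_mul G y v) A + cliff_mul_tr G y (cliff_mul G x v) A
      = (\<Sum>I<16. x I * (gamma_mul_tr G I (cliff_mul G y v) A + cliff_mul_tr G y (gamma_mul G I v) A))"
    unfolding cliff_mul_tr_cliff_mul[of G y x]
    by (simp add: cliff_mul_tr_def[of G x] sum.distrib[symmetric] distrib_left)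
  also have "\<dots> = (\<Sum>I<16. x I * (2 * y I * v A))"
    using cliff_mul_tr_gamma_mul_anticomm[OF A, of _ y v] by (intro sum.cong refl) (simp add: add.commute)
  also have "\<dots> = 2 * vec_pairing x y * v A"
    by (simp add: vec_pairing_def sum_distrib_left sum_distrib_right mult_ac)
  finally show ?thesis .
qed

lemma cliff_annihilates_cliff_mul_tr:
  assumes "cliff_annihilates G x v" and "A < 128"
  shows "cliff_mul_tr G y (cliff_mul G x v) A = 0"
proof -
  have "cliff_mul_tr G y (cliff_mul G x v) A = cliff_mul_tr G y (\<lambda>_. 0) A"
    by (rule cliff_mul_tr_cong) (use assms(1) in \<open>simp add: cliff_annihilates_def\<close>)
  then show ?thesis by simp
qed

lemma null_if_cliff_annihilates:
  assumes "cliff_annihilates G x v" and "A < 128" and "v A \<noteq> 0"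
  shows "vec_pairing x x = 0"
  using cliff_mul_tr_cliff_mul_anticomm[OF assms(2), of x x v]
    cliff_annihilates_cliff_mul_tr[OF assms(1,2), of x] assms(3)
  by simp

lemma cliff_annihilated_eq:
  assumes "cliff_annihilates G x v" and "vec_pairing x y = 1" and "A < 128"
  shows "v A = cliff_mul_tr G x (cliff_mul G y v) A / 2"
  using cliff_mul_tr_cliff_mul_anticomm[OF assms(3), of x y v]
    cliff_annihilates_cliff_mul_tr[OF assms(1,3), of y] assms(2)
  by simp

lemma gamma_mul_cliff_annihilated_eq:
  assumes v: "cliff_annihilates G x v" and xy: "vec_pairing x y = 1"
    and I: "I < 16" and Ad: "Ad < 128"
  shows "gamma_mul G I v Ad
       = x I * cliff_mul G y v Ad - cliff_mul G x (gamma_mul_tr G I (cliff_mul G y v)) Ad / 2"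
proof -
  have "gamma_mul G I v Ad = gamma_mul G I (\<lambda>A. (1/2) * cliff_mul_tr G x (cliff_mul G y v) A) Ad"
    by (rule gamma_mul_cong) (simp add: cliff_annihilated_eq[OF v xy])
  also have "\<dots> = (1/2) * gamma_mul G I (cliff_mul_tr G x (cliff_mul G y v)) Ad"
    by (rule gamma_mul_scale)
  also have "gamma_mul G I (cliff_mul_tr G x (cliff_mul G y v)) Ad
      = 2 * x I * cliff_mul G y v Ad - cliff_mul G x (gamma_mul_tr G I (cliff_mul G y v)) Ad"
    using cliff_mul_gamma_mul_tr_anticomm[OF Ad I, of x "cliff_mul G y v"] by (simp add: algebra_simps eq_diff_eq)
  finally show ?thesis by (simp add: algebra_simps)
qed

lemma spinor_pairing_cliff_mul_null:
  assumes "vec_pairing x x = 0"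
  shows "spinor_pairing (cliff_mul G x u) (cliff_mul G x v) = 0"
proof -
  have "spinor_pairing (cliff_mul G x u) (cliff_mul G x v)
      = spinor_pairing (cliff_mul_tr G x (cliff_mul G x u)) v"
    by (rule spinor_pairing_cliff_mul)
  also have "\<dots> = spinor_pairing (\<lambda>_. 0) v"
    by (rule spinor_pairing_cong) (use cliff_mul_tr_cliff_mul_anticomm[of _ x x u] assms in simp_all)
  finally show ?thesis by simp
qed

end

subsection \<open>The adjoint action of P\<close>

definition so_part :: "(nat \<Rightarrow> nat \<Rightarrow> nat \<Rightarrow> real) \<Rightarrow> (nat \<Rightarrow> complex) \<Rightarrow> (nat \<Rightarrow> complex) \<Rightarrow> nat \<Rightarrow> nat \<Rightarrow> complex" where
  "so_part G P v I J = (if I < 16 \<and> J < 16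
     then (spinor_pairing (gamma_mul G I P) (gamma_mul G J v) - spinor_pairing (gamma_mul G J P) (gamma_mul G I v)) / 2
     else 0)"

definition p_part :: "(nat \<Rightarrow> nat \<Rightarrow> nat \<Rightarrow> real) \<Rightarrow> (nat \<Rightarrow> complex) \<Rightarrow> (nat \<Rightarrow> nat \<Rightarrow> complex) \<Rightarrow> nat \<Rightarrow> complex" where
  "p_part G P a B = (if B < 128
     then (\<Sum>I<16. \<Sum>J<16.
            a I J * (gamma_mul_tr G J (gamma_mul G I P) B - gamma_mul_tr G I (gamma_mul G J P) B) / 8)
     else 0)"

lemma gamma2_pairing_sum:
  "(\<Sum>A<128. \<Sum>B<128. P A * v B * complex_of_real (gamma2 G I J A B))
   = (spinor_pairing (gamma_mul G I P) (gamma_mul G J v) - spinor_pairing (gamma_mul G J P) (gamma_mul G I v)) / 2"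
proof -
  have expand: "spinor_pairing (gamma_mul G I P) (gamma_mul G J v)
      = (\<Sum>A<128. \<Sum>B<128. P A * v B * complex_of_real (\<Sum>Ad<128. G I A Ad * G J B Ad))" for I J
  proof -
    have "spinor_pairing (gamma_mul G I P) (gamma_mul G J v)
        = (\<Sum>Ad<128. \<Sum>A<128. \<Sum>B<128. P A * v B * (complex_of_real (G I A Ad) * complex_of_real (G J B Ad)))"
      by (simp add: spinor_pairing_def gamma_mul_def sum_product mult_ac)
    also have "\<dots> = (\<Sum>A<128. \<Sum>Ad<128. \<Sum>B<128. P A * v B * (complex_of_real (G I A Ad) * complex_of_real (G J B Ad)))"
      by (rule sum.swap)
    also have "\<dots> = (\<Sum>A<128. \<Sum>B<128. \<Sum>Ad<128. P A * v B * (complex_of_real (G I A Ad) * complex_of_real (G J B Ad)))"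
      by (rule sum.cong[OF refl], rule sum.swap)
    finally show ?thesis by (simp add: sum_distrib_left)
  qed
  show ?thesis
    unfolding expand gamma2_def
    by (simp add: sum_subtractf right_diff_distrib sum_divide_distrib[symmetric] algebra_simps diff_divide_distrib)
qed

lemma gamma2_p_sum:
  "(\<Sum>A<128. 1/4 * a I J * complex_of_real (gamma2 G I J A B) * P A)
   = a I J * (gamma_mul_tr G J (gamma_mul G I P) B - gamma_mul_tr G I (gamma_mul G J P) B) / 8"
proof -
  have expand: "gamma_mul_tr G J (gamma_mul G I P) B
      = (\<Sum>A<128. P A * complex_of_real (\<Sum>Ad<128. G I A Ad * G J B Ad))" for I J
  proof -
    have "gamma_mul_tr G J (gamma_mul G I P) B
        = (\<Sum>Ad<128. \<Sum>A<128. P A * (complex_of_real (G I A Ad) * complex_of_real (G J B Ad)))"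
      by (simp add: gamma_mul_tr_def gamma_mul_def sum_distrib_left mult_ac)
    also have "\<dots> = (\<Sum>A<128. \<Sum>Ad<128. P A * (complex_of_real (G I A Ad) * complex_of_real (G J B Ad)))"
      by (rule sum.swap)
    finally show ?thesis by (simp add: sum_distrib_left)
  qed
  show ?thesis
    unfolding expand gamma2_def
    by (simp add: sum_subtractf[symmetric] sum_distrib_left sum_divide_distrib[symmetric] algebra_simps diff_divide_distrib)
qed

lemma ad_p_eq: "ad_p G P x = (so_part G P (snd x), p_part G P (fst x))"
  by (cases x) (simp only: ad_p_def so_part_def[abs_def] p_part_def[abs_def] gamma2_pairing_sum gamma2_p_sum prod.case fst_conv snd_conv)

lemma ad_p_vanishing: "\<forall>A<128. P A = 0 \<Longrightarrow> ad_p G P x = e8_zero"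
  by (cases x) (auto simp: ad_p_def e8_zero_def fun_eq_iff intro!: sum.neutral)

lemma so_part_zero: "so_part G P (\<lambda>_. 0) = (\<lambda>_ _. 0)"
  by (simp add: so_part_def spinor_pairing_def gamma_mul_def fun_eq_iff)

subsection \<open>The filtration defined by a null vector\<close>

definition stabilizes_line :: "(nat \<Rightarrow> complex) \<Rightarrow> (nat \<Rightarrow> nat \<Rightarrow> complex) \<Rightarrow> bool" where
  "stabilizes_line \<xi> a \<longleftrightarrow> (\<forall>I<16. \<forall>J<16. a I J = - a J I) \<and> (\<exists>c. \<forall>I<16. (\<Sum>J<16. a I J * \<xi> J) = c * \<xi> I)"

definition null_wedge :: "(nat \<Rightarrow> complex) \<Rightarrow> (nat \<Rightarrow> nat \<Rightarrow> complex) \<Rightarrow> bool" where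
  "null_wedge \<xi> a \<longleftrightarrow> (\<exists>w. vec_pairing \<xi> w = 0 \<and> (\<forall>I<16. \<forall>J<16. a I J = \<xi> I * w J - \<xi> J * w I))"

context
  fixes G :: "nat \<Rightarrow> nat \<Rightarrow> nat \<Rightarrow> real" and P \<xi> :: "nat \<Rightarrow> complex"
  assumes gamma: "gamma_blocks G" and susy: "cliff_annihilates G \<xi> P"
begin

lemma cliff_mul_tr_gamma_mul_susy:
  assumes A: "A < 128" and I: "I < 16"
  shows "cliff_mul_tr G \<xi> (gamma_mul G I P) A = 2 * \<xi> I * P A"
proof -
  have "gamma_mul_tr G I (cliff_mul G \<xi> P) A = gamma_mul_tr G I (\<lambda>_. 0) A"
    by (rule gamma_mul_tr_cong) (use susy in \<open>simp add: cliff_annihilates_def\<close>)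
  then show ?thesis
    using cliff_mul_tr_gamma_mul_anticomm[OF gamma A I, of \<xi> P] by simp
qed

lemma cliff_mul_gamma_mul_tr_gamma_mul_susy:
  assumes I: "I < 16" and J: "J < 16" and Ad: "Ad < 128"
  shows "cliff_mul G \<xi> (gamma_mul_tr G J (gamma_mul G I P)) Ad
       = 2 * \<xi> J * gamma_mul G I P Ad - 2 * \<xi> I * gamma_mul G J P Ad"
proof -
  have "gamma_mul G J (cliff_mul_tr G \<xi> (gamma_mul G I P)) Ad = gamma_mul G J (\<lambda>A. (2 * \<xi> I) * P A) Ad"
    by (rule gamma_mul_cong) (simp add: cliff_mul_tr_gamma_mul_susy I)
  also have "\<dots> = 2 * \<xi> I * gamma_mul G J P Ad"
    by (rule gamma_mul_scale)
  finally show ?thesis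
    using cliff_mul_gamma_mul_tr_anticomm[OF gamma Ad J, of \<xi> "gamma_mul G I P"] by (simp add: algebra_simps)
qed

lemma so_part_stabilizes_line: "stabilizes_line \<xi> (so_part G P v)"
  unfolding stabilizes_line_def
proof (intro conjI allI impI exI)
  fix I J :: nat
  assume "I < 16" "J < 16"
  then show "so_part G P v I J = - so_part G P v J I"
    by (simp add: so_part_def field_simps)
next
  fix I :: nat
  assume I: "I < 16"
  have "spinor_pairing (cliff_mul G \<xi> P) (gamma_mul G I v) = spinor_pairing (\<lambda>_. 0) (gamma_mul G I v)"
    by (rule spinor_pairing_cong) (use susy in \<open>simp_all add: cliff_annihilates_def\<close>)
  then have P_term: "spinor_pairing (cliff_mul G \<xi> P) (gamma_mul G I v) = 0"
    by simp
  have "(\<Sum>J<16. so_part G P v I J * \<xi> J)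
      = (\<Sum>J<16. \<xi> J * spinor_pairing (gamma_mul G I P) (gamma_mul G J v)
                - \<xi> J * spinor_pairing (gamma_mul G J P) (gamma_mul G I v)) / 2"
    using I by (simp add: so_part_def sum_divide_distrib algebra_simps)
  also have "\<dots> = (spinor_pairing (gamma_mul G I P) (cliff_mul G \<xi> v)
                  - spinor_pairing (cliff_mul G \<xi> P) (gamma_mul G I v)) / 2"
    by (simp add: sum_subtractf cliff_mul_fun spinor_pairing_sum_left spinor_pairing_sum_right
        spinor_pairing_scale_left spinor_pairing_scale_right)
  also have "\<dots> = spinor_pairing (cliff_mul_tr G \<xi> (gamma_mul G I P)) v / 2"
    by (simp add: P_term spinor_pairing_cliff_mul)
  also have "\<dots> = spinor_pairing (\<lambda>A. (2 * \<xi> I) * P A) v / 2"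
    by (rule arg_cong[where f="\<lambda>z. z / 2"], rule spinor_pairing_cong)
       (simp_all add: cliff_mul_tr_gamma_mul_susy I)
  also have "\<dots> = spinor_pairing P v * \<xi> I"
    by (simp add: spinor_pairing_scale_left)
  finally show "(\<Sum>J<16. so_part G P v I J * \<xi> J) = spinor_pairing P v * \<xi> I" .
qed

lemma cliff_mul_p_part:
  assumes Ad: "Ad < 128"
  shows "cliff_mul G \<xi> (p_part G P a) Ad
       = (\<Sum>I<16. \<Sum>J<16. a I J * \<xi> J * gamma_mul G I P Ad) / 2
         - (\<Sum>I<16. \<Sum>J<16. a I J * \<xi> I * gamma_mul G J P Ad) / 2"
proof -
  have "cliff_mul G \<xi> (p_part G P a) Ad
      = cliff_mul G \<xi> (\<lambda>B. \<Sum>I<16. \<Sum>J<16. a I J / 8 *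
          (gamma_mul_tr G J (gamma_mul G I P) B - gamma_mul_tr G I (gamma_mul G J P) B)) Ad"
    by (rule cliff_mul_cong) (simp add: p_part_def)
  also have "\<dots> = (\<Sum>I<16. \<Sum>J<16. a I J / 8 * (cliff_mul G \<xi> (gamma_mul_tr G J (gamma_mul G I P)) Ad
                                              - cliff_mul G \<xi> (gamma_mul_tr G I (gamma_mul G J P)) Ad))"
    by (simp only: cliff_mul_sum cliff_mul_scale cliff_mul_diff)
  also have "\<dots> = (\<Sum>I<16. \<Sum>J<16. a I J * \<xi> J * gamma_mul G I P Ad / 2 - a I J * \<xi> I * gamma_mul G J P Ad / 2)"
    by (intro sum.cong refl) (simp add: cliff_mul_gamma_mul_tr_gamma_mul_susy Ad algebra_simps)
  also have "\<dots> = (\<Sum>I<16. \<Sum>J<16. a I J * \<xi> J * gamma_mul G I P Ad) / 2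
                 - (\<Sum>I<16. \<Sum>J<16. a I J * \<xi> I * gamma_mul G J P Ad) / 2"
    by (simp only: sum_subtractf sum_divide_distrib[symmetric])
  finally show ?thesis .
qed

lemma p_part_annihilated:
  assumes "stabilizes_line \<xi> a"
  shows "cliff_annihilates G \<xi> (p_part G P a)"
  unfolding cliff_annihilates_def
proof (intro allI impI)
  fix Ad :: nat
  assume Ad: "Ad < 128"
  from assms obtain c where anti: "\<And>I J. I < 16 \<Longrightarrow> J < 16 \<Longrightarrow> a I J = - a J I"
    and eigen: "\<And>I. I < 16 \<Longrightarrow> (\<Sum>J<16. a I J * \<xi> J) = c * \<xi> I"
    unfolding stabilizes_line_def by blast
  have P_term: "cliff_mul G \<xi> P Ad = 0"
    using susy Ad by (simp add: cliff_annihilates_def)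
  have left: "(\<Sum>I<16. \<Sum>J<16. a I J * \<xi> J * gamma_mul G I P Ad) = 0"
  proof -
    have "(\<Sum>I<16. \<Sum>J<16. a I J * \<xi> J * gamma_mul G I P Ad)
        = (\<Sum>I<16. (\<Sum>J<16. a I J * \<xi> J) * gamma_mul G I P Ad)"
      by (simp add: sum_distrib_right)
    also have "\<dots> = c * cliff_mul G \<xi> P Ad"
      by (simp add: eigen cliff_mul_def sum_distrib_left mult.assoc)
    finally show ?thesis by (simp add: P_term)
  qed
  have right: "(\<Sum>I<16. \<Sum>J<16. a I J * \<xi> I * gamma_mul G J P Ad) = 0"
  proof -
    have eigen': "(\<Sum>I<16. a I J * \<xi> I) = - (c * \<xi> J)" if J: "J < 16" for J
    proof -
      have "(\<Sum>I<16. a I J * \<xi> I) = - (\<Sum>I<16. a J I * \<xi> I)"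
        using J by (simp add: anti[of _ J] sum_negf)
      then show ?thesis by (simp add: eigen J)
    qed
    have "(\<Sum>I<16. \<Sum>J<16. a I J * \<xi> I * gamma_mul G J P Ad)
        = (\<Sum>J<16. (\<Sum>I<16. a I J * \<xi> I) * gamma_mul G J P Ad)"
      by (subst sum.swap) (simp add: sum_distrib_right)
    also have "\<dots> = - c * cliff_mul G \<xi> P Ad"
      by (simp add: eigen' cliff_mul_def sum_distrib_left sum_negf mult.assoc)
    finally show ?thesis by (simp add: P_term)
  qed
  show "cliff_mul G \<xi> (p_part G P a) Ad = 0"
    by (simp add: cliff_mul_p_part Ad left right)
qed

context
  fixes \<eta> :: "nat \<Rightarrow> complex"
  assumes null: "vec_pairing \<xi> \<xi> = 0" and dual: "vec_pairing \<xi> \<eta> = 1"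
begin

lemma spinor_pairing_gamma_mul_annihilated:
  assumes X: "cliff_annihilates G \<xi> X" and Y: "cliff_annihilates G \<xi> Y"
    and I: "I < 16" and J: "J < 16"
  shows "spinor_pairing (gamma_mul G I X) (gamma_mul G J Y)
       = \<xi> I * \<xi> J * spinor_pairing (cliff_mul G \<eta> X) (cliff_mul G \<eta> Y)
         - \<xi> I / 2 * spinor_pairing (cliff_mul_tr G \<xi> (cliff_mul G \<eta> X)) (gamma_mul_tr G J (cliff_mul G \<eta> Y))
         - \<xi> J / 2 * spinor_pairing (cliff_mul_tr G \<xi> (cliff_mul G \<eta> Y)) (gamma_mul_tr G I (cliff_mul G \<eta> X))"
proof -
  define p where "p = cliff_mul G \<eta> X"
  define s where "s = cliff_mul G \<eta> Y"
  have "spinor_pairing (gamma_mul G I X) (gamma_mul G J Y)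
      = spinor_pairing (\<lambda>Ad. \<xi> I * p Ad - (1/2) * cliff_mul G \<xi> (gamma_mul_tr G I p) Ad)
                       (\<lambda>Ad. \<xi> J * s Ad - (1/2) * cliff_mul G \<xi> (gamma_mul_tr G J s) Ad)"
    by (rule spinor_pairing_cong)
       (simp_all add: p_def s_def gamma_mul_cliff_annihilated_eq[OF gamma X dual I]
         gamma_mul_cliff_annihilated_eq[OF gamma Y dual J])
  also have "\<dots> = \<xi> I * (\<xi> J * spinor_pairing p s)
        - \<xi> I * ((1/2) * spinor_pairing p (cliff_mul G \<xi> (gamma_mul_tr G J s)))
        - ((1/2) * (\<xi> J * spinor_pairing (cliff_mul G \<xi> (gamma_mul_tr G I p)) s)
           - (1/2) * ((1/2) * spinor_pairing (cliff_mul G \<xi> (gamma_mul_tr G I p)) (cliff_mul G \<xi> (gamma_mul_tr G J s))))"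
    by (simp only: spinor_pairing_diff_left spinor_pairing_diff_right
        spinor_pairing_scale_left spinor_pairing_scale_right)
  also have "\<dots> = \<xi> I * \<xi> J * spinor_pairing p s
        - \<xi> I / 2 * spinor_pairing (cliff_mul_tr G \<xi> p) (gamma_mul_tr G J s)
        - \<xi> J / 2 * spinor_pairing (cliff_mul_tr G \<xi> s) (gamma_mul_tr G I p)"
    by (simp only: spinor_pairing_cliff_mul_null[OF gamma null] mult_zero_right diff_zero)
       (simp add: spinor_pairing_cliff_mul spinor_pairing_comm[of "cliff_mul G \<xi> (gamma_mul_tr G I p)" s]
         algebra_simps)
  finally show ?thesis by (simp add: p_def s_def)
qed

lemma so_part_null_wedge:
  assumes v: "cliff_annihilates G \<xi> v"
  shows "null_wedge \<xi> (so_part G P v)"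
  unfolding null_wedge_def
proof (intro exI conjI allI impI)
  define p where "p = cliff_mul G \<eta> P"
  define s where "s = cliff_mul G \<eta> v"
  define w where "w J = (spinor_pairing (cliff_mul_tr G \<xi> s) (gamma_mul_tr G J p)
                        - spinor_pairing (cliff_mul_tr G \<xi> p) (gamma_mul_tr G J s)) / 4" for J
  have contract: "(\<Sum>J<16. \<xi> J * spinor_pairing u (gamma_mul_tr G J q))
      = spinor_pairing u (cliff_mul_tr G \<xi> q)" for u q
    by (simp add: cliff_mul_tr_fun spinor_pairing_sum_right spinor_pairing_scale_right)
  have "vec_pairing \<xi> w
      = ((\<Sum>J<16. \<xi> J * spinor_pairing (cliff_mul_tr G \<xi> s) (gamma_mul_tr G J p))
         - (\<Sum>J<16. \<xi> J * spinor_pairing (cliff_mul_tr G \<xi> p) (gamma_mul_tr G J s))) / 4"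
    unfolding vec_pairing_def w_def sum_subtractf[symmetric] sum_divide_distrib
    by (intro sum.cong refl) (simp add: algebra_simps)
  also have "\<dots> = 0"
    unfolding contract by (simp add: spinor_pairing_comm[of "cliff_mul_tr G \<xi> s"])
  finally show "vec_pairing \<xi> w = 0" .
  fix I J :: nat
  assume I: "I < 16" and J: "J < 16"
  show "so_part G P v I J = \<xi> I * w J - \<xi> J * w I"
    using I J
    by (simp add: so_part_def w_def p_def s_def field_simps
        spinor_pairing_gamma_mul_annihilated[OF susy v I J]
        spinor_pairing_gamma_mul_annihilated[OF susy v J I])
qed

end

lemma p_part_null_wedge:
  assumes "null_wedge \<xi> a"
  shows "p_part G P a = (\<lambda>_. 0)"
proof
  fix B :: nat
  show "p_part G P a B = 0"
  proof (cases "B < 128")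
    case False
    then show ?thesis by (simp add: p_part_def)
  next
    case B: True
    from assms obtain w where w: "vec_pairing \<xi> w = 0"
      and a: "\<And>I J. I < 16 \<Longrightarrow> J < 16 \<Longrightarrow> a I J = \<xi> I * w J - \<xi> J * w I"
      unfolding null_wedge_def by blast
    define X where "X I J = gamma_mul_tr G J (gamma_mul G I P) B" for I J
    have \<xi>w: "(\<Sum>I<16. \<Sum>J<16. \<xi> I * w J * X I J) = 0"
      using cliff_annihilates_cliff_mul_tr[OF gamma susy B, of w]
      by (simp add: X_def cliff_mul_tr_cliff_mul_expand)
    have w\<xi>: "(\<Sum>I<16. \<Sum>J<16. w I * \<xi> J * X I J) = 0"
      using cliff_mul_tr_cliff_mul_anticomm[OF gamma B, of \<xi> w P]
        cliff_annihilates_cliff_mul_tr[OF gamma susy B, of w] w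
      by (simp add: X_def cliff_mul_tr_cliff_mul_expand vec_pairing_def)
    have swap_\<xi>w: "(\<Sum>I<16. \<Sum>J<16. \<xi> I * w J * X J I) = (\<Sum>I<16. \<Sum>J<16. w I * \<xi> J * X I J)"
      by (subst sum.swap) (simp add: mult_ac)
    have swap_w\<xi>: "(\<Sum>I<16. \<Sum>J<16. w I * \<xi> J * X J I) = (\<Sum>I<16. \<Sum>J<16. \<xi> I * w J * X I J)"
      by (subst sum.swap) (simp add: mult_ac)
    have "p_part G P a B = (\<Sum>I<16. \<Sum>J<16.
        ((\<xi> I * w J * X I J - \<xi> I * w J * X J I) - (w I * \<xi> J * X I J - w I * \<xi> J * X J I)) / 8)"
      using B by (simp add: p_part_def a X_def algebra_simps)
    also have "\<dots> = ((\<Sum>I<16. \<Sum>J<16. \<xi> I * w J * X I J) - (\<Sum>I<16. \<Sum>J<16. \<xi> I * w J * X J I)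
        - ((\<Sum>I<16. \<Sum>J<16. w I * \<xi> J * X I J) - (\<Sum>I<16. \<Sum>J<16. w I * \<xi> J * X J I))) / 8"
      by (simp only: sum_divide_distrib[symmetric] sum_subtractf)
    finally show ?thesis
      by (simp add: swap_\<xi>w swap_w\<xi> \<xi>w w\<xi>)
  qed
qed

lemma ad_p_pow5_eq_zero:
  assumes null: "vec_pairing \<xi> \<xi> = 0" and dual: "vec_pairing \<xi> \<eta> = 1"
  shows "(ad_p G P ^^ 5) x = e8_zero"
proof -
  let ?ad = "ad_p G P"
  have annihilated: "cliff_annihilates G \<xi> (snd (?ad (?ad y)))" for y
    by (simp add: ad_p_eq p_part_annihilated so_part_stabilizes_line)
  have wedge: "null_wedge \<xi> (fst (?ad (?ad (?ad y))))" for y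
    using so_part_null_wedge[OF null dual annihilated] by (simp add: ad_p_eq)
  have p_zero: "snd (?ad (?ad (?ad (?ad y)))) = (\<lambda>_. 0)" for y
    using p_part_null_wedge[OF wedge] by (simp add: ad_p_eq)
  have so_zero: "fst (?ad y) = (\<lambda>_ _. 0)" if "snd y = (\<lambda>_. 0)" for y
    using that by (simp add: ad_p_eq so_part_zero)
  show ?thesis
    using so_zero[OF p_zero[of x]] p_zero[of "?ad x"] by (simp add: e8_zero_def prod_eq_iff eval_nat_numeral)
qed

end

theorem mainTheorem4:
  fixes G :: "nat \<Rightarrow> nat \<Rightarrow> nat \<Rightarrow> real"
    and P :: "nat \<Rightarrow> complex"
    and \<xi> :: "nat \<Rightarrow> complex"
  assumes "gamma_blocks G"
    and "\<exists>I<16. \<xi> I \<noteq> 0"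
    and "\<forall>Ad<128. (\<Sum>I<16. \<Sum>A<128. complex_of_real (G I A Ad) * P A * \<xi> I) = 0"
  shows "nilpotent_p G P"
proof (cases "\<forall>A<128. P A = 0")
  case True
  show ?thesis
    unfolding nilpotent_p_def by (intro exI[of _ 1]) (simp add: ad_p_vanishing True)
next
  case False
  then obtain A where A: "A < 128" "P A \<noteq> 0" by blast
  have susy: "cliff_annihilates G \<xi> P"
    using assms(3) by (simp add: cliff_annihilates_def cliff_mul_expand)
  have null: "vec_pairing \<xi> \<xi> = 0"
    using null_if_cliff_annihilates[OF assms(1) susy A] .
  obtain \<eta> where "vec_pairing \<xi> \<eta> = 1"
    using vec_pairing_dual assms(2) by blast
  then show ?thesis
    unfolding nilpotent_p_def using ad_p_pow5_eq_zero[OF assms(1) susy null] by blast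
qed

end
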